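(* Let $S$ be a semigroup with a maximal $\mathcal{J}$-class $J$ (with respect to $\le_{\mathcal{J}}$) such that $\langle J\rangle\neq S$. Then $\sigma_s(S)=2$.
   Context: For a semigroup $S$, $S^1$ is $S$ with an identity adjoined if $S$ has none, and $S$ otherwise. $x\mathcal{J}y$ iff $S^1xS^1=S^1yS^1$; the classes are $\mathcal{J}$-classes, ordered by $J_x\le_{\mathcal{J}}J_y$ iff $S^1xS^1\subseteq S^1yS^1$. $\langle J\rangle$ is the subsemigroup generated by $J$. $\sigma_s(S)$ is the least positive integer $n$ such that $S$ is the union of $n$ proper subsemigroups, or $\infty$ if none exists. *)

theory Defs
  imports Main "HOL-Library.Extended_Nat"
begin

text \<open>A semigroup is modelled as a type of class semigroup_mult; S is UNIV.\<close>

definition subsemigroup :: "'a::semigroup_mult set \<Rightarrow> bool" where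
  "subsemigroup T \<longleftrightarrow> (\<forall>x\<in>T. \<forall>y\<in>T. x * y \<in> T)"

text \<open>Principal two-sided ideal S^1 x S^1.\<close>
definition princ_ideal :: "'a::semigroup_mult \<Rightarrow> 'a set" where
  "princ_ideal x = {u. u = x \<or> (\<exists>a. u = a * x) \<or> (\<exists>b. u = x * b) \<or> (\<exists>a b. u = a * x * b)}"

definition J_class :: "'a::semigroup_mult \<Rightarrow> 'a set" where
  "J_class x = {y. princ_ideal y = princ_ideal x}"

definition maximal_J_class :: "'a::semigroup_mult set \<Rightarrow> bool" where
  "maximal_J_class J \<longleftrightarrow> (\<exists>x. J = J_class x \<and>
      (\<forall>y. princ_ideal x \<subseteq> princ_ideal y \<longrightarrow> princ_ideal y \<subseteq> princ_ideal x))"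

definition generated :: "'a::semigroup_mult set \<Rightarrow> 'a set" where
  "generated A = \<Inter>{T. subsemigroup T \<and> A \<subseteq> T}"

definition covered_by :: "nat \<Rightarrow> 'a::semigroup_mult set \<Rightarrow> bool" where
  "covered_by n S \<longleftrightarrow> (\<exists>T :: nat \<Rightarrow> 'a set.
      (\<forall>i<n. subsemigroup (T i) \<and> T i \<subseteq> S \<and> T i \<noteq> S) \<and> (\<Union>i<n. T i) = S)"

definition sigma_s :: "'a::semigroup_mult set \<Rightarrow> enat" where
  "sigma_s S = (if \<exists>n>0. covered_by n S then enat (LEAST n. n > 0 \<and> covered_by n S) else \<infinity>)"

end

theory Submission
  imports Defs
begin

text \<open>Since principal ideals shrink under multiplication, a product lying in the maximal
  \<open>\<J>\<close>-class \<open>J\<close> forces its factors into \<open>J\<close>; so the complement of \<open>J\<close> is a subsemigroup,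
  proper because \<open>J \<noteq> {}\<close>. Together with the proper subsemigroup \<open>\<langle>J\<rangle>\<close> it covers \<open>S\<close>,
  and no semigroup is the union of a single proper subsemigroup.\<close>

lemma princ_ideal_mult_subset_left: "princ_ideal (x * y) \<subseteq> princ_ideal x"
  unfolding princ_ideal_def by (auto simp: mult.assoc)

lemma subsemigroup_generated: "subsemigroup (generated A)"
  unfolding generated_def subsemigroup_def by auto

lemma subset_generated: "A \<subseteq> generated A"
  unfolding generated_def by auto

lemma subsemigroup_Compl_maximal_J_class:
  assumes "maximal_J_class J"
  shows "subsemigroup (- J)"
  unfolding subsemigroup_def
proof (intro ballI)
  obtain j where J: "J = J_class j"
    and max: "\<And>y. princ_ideal j \<subseteq> princ_ideal y \<Longrightarrow> princ_ideal y \<subseteq> princ_ideal j"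
    using assms unfolding maximal_J_class_def by blast
  fix x y assume "x \<in> - J" "y \<in> - J"
  show "x * y \<in> - J"
  proof
    assume "x * y \<in> J"
    then have "princ_ideal (x * y) = princ_ideal j"
      by (simp add: J J_class_def)
    then have "princ_ideal j \<subseteq> princ_ideal x"
      using princ_ideal_mult_subset_left by metis
    with max have "x \<in> J"
      by (auto simp: J J_class_def)
    with \<open>x \<in> - J\<close> show False by simp
  qed
qed

lemma maximal_J_class_nonempty: "maximal_J_class J \<Longrightarrow> J \<noteq> {}"
  unfolding maximal_J_class_def J_class_def by auto

lemma covered_by_2I:
  fixes A B :: "'a::semigroup_mult set"
  assumes "subsemigroup A" "subsemigroup B" "A \<noteq> UNIV" "B \<noteq> UNIV" "A \<union> B = UNIV"
  shows "covered_by 2 (UNIV :: 'a set)"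
proof -
  define T where "T i = (if i = 0 then A else B)" for i :: nat
  have "\<forall>i<2. subsemigroup (T i) \<and> T i \<subseteq> UNIV \<and> T i \<noteq> UNIV"
    using assms by (auto simp: T_def)
  moreover have "(\<Union>i<2. T i) = UNIV"
    using assms(5) by (auto simp: T_def lessThan_Suc numeral_2_eq_2)
  ultimately show ?thesis
    unfolding covered_by_def by blast
qed

lemma not_covered_by_1: "\<not> covered_by 1 (UNIV :: 'a::semigroup_mult set)"
  unfolding covered_by_def by auto

lemma sigma_s_UNIV_eq_2I:
  assumes "covered_by 2 (UNIV :: 'a::semigroup_mult set)"
  shows "sigma_s (UNIV :: 'a set) = 2"
proof -
  have "(LEAST n. n > 0 \<and> covered_by n (UNIV :: 'a set)) = 2"
  proof (rule Least_equality)
    fix m assume "0 < m \<and> covered_by m (UNIV :: 'a set)"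
    with not_covered_by_1 show "2 \<le> m"
      by (cases "m = 1") auto
  qed (use assms in simp)
  moreover have "\<exists>n>0. covered_by n (UNIV :: 'a set)"
    using assms by (intro exI[of _ 2]) simp
  ultimately show ?thesis
    unfolding sigma_s_def by (simp add: numeral_eq_enat)
qed

theorem mainTheorem7:
  fixes J :: "'a::semigroup_mult set"
  assumes "maximal_J_class J"
    and "generated J \<noteq> UNIV"
  shows "sigma_s (UNIV :: 'a set) = 2"
proof (rule sigma_s_UNIV_eq_2I, rule covered_by_2I)
  show "subsemigroup (- J)" "- J \<noteq> UNIV"
    using subsemigroup_Compl_maximal_J_class maximal_J_class_nonempty assms(1) by auto
  show "subsemigroup (generated J)" "generated J \<noteq> UNIV"
    using subsemigroup_generated assms(2) by auto
  show "- J \<union> generated J = UNIV"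
    using subset_generated by blast
qed

end
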